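(* Impose (A1)–(A6), one of the support cases (A7.1), (A7.2), (A7.3)(a), (A7.3)(b), and (A8''). Fix $x\in\mathcal X$, $u\in[0,1]$, and let $\underline\Delta,\overline\Delta$ and $\underline\Lambda,\overline\Lambda$ be the functions defined in the context for that support case. Then $$\min\{\underline\Delta(x,u),\underline\Lambda(x,u)\}\le\Delta^{OO}_{Y^*}(x,u)\le\max\{\overline\Delta(x,u),\overline\Lambda(x,u)\}.$$
   Context: Standing setup. On a common probability space: $X$ (covariates, support $\mathcal X$), $Z$ (instrument, support $\mathcal Z$), $W=(X,Z)$; latent real random variables $U,V$, jointly continuously distributed conditional on $X$, with $U\mid X$ and $V\mid X$ each Uniform$[0,1]$ (their joint dependence unrestricted); real potential outcomes of interest $Y_0^*,Y_1^*$. Given functions $P:\mathcal X\times\mathcal Z\to[0,1]$ and $Q:\{0,1\}\times\mathcal X\to[0,1]$, define the treatment $D=\mathbf 1\{P(W)\ge U\}$, potential selection indicators $S_d=\mathbf 1\{Q(d,X)\ge V\}$ ($d\in\{0,1\}$), selection indicator $S=DS_1+(1-D)S_0$, potential observable outcomes $Y_d=S_dY_d^*$ and observable outcome $Y=DY_1+(1-D)Y_0$. For $x\in\mathcal X$, $u\in[0,1]$, $d\in\{0,1\}$: $m_d^Y(x,u)=\mathbb E[Y_d\mid X=x,U=u]$, $m_d^S(x,u)=\mathbb E[S_d\mid X=x,U=u]$, $\Delta_S(x,u)=m_1^S(x,u)-m_0^S(x,u)$, and $\Delta^{OO}_{Y^*}(x,u)=\mathbb E[Y_1^*-Y_0^*\mid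 X=x,U=u,S_0=1,S_1=1]$. Ratios appearing are assumed well defined. Assumptions: (A1) $Z$ is independent of $(U,V,Y_0^*,Y_1^* )$ conditional on $X$; (A2) the distribution of $P(W)$ given $X$ is nondegenerate; (A3) $\mathbb E|Y_d^*|<\infty$ and $\mathbb E[(Y_d^* )^2]<\infty$; (A4) $0<\mathbb P[D=1\mid X]<1$; (A5) $X$ is invariant to counterfactual manipulation of treatment; (A6) $Y_0^*,Y_1^*$ have a common support $\mathcal Y^*\subseteq\mathbb R$; $\underline y^*=\inf\mathcal Y^*$, $\overline y^*=\sup\mathcal Y^*$ (possibly infinite), known. Support cases: (A7.1) $\underline y^*>-\infty$, $\overline y^*=+\infty$, $\mathcal Y^*$ an interval; (A7.2) $\underline y^*=-\infty$, $\overline y^*<\infty$, $\mathcal Y^*$ an interval; (A7.3) both finite and either (a) $\mathcal Y^*$ an interval or (b) $\underline y^*,\overline y^*\in\mathcal Y^*$. (A8'') (monotone selection, unknown direction) either $Q(1,x)>Q(0,x)>0$ for all $x\in\mathcal X$, or $Q(0,x)>Q(1,x)>0$ for all $x\in\mathcal X$. Functions (at $(x,u)$): under (A7.1), $\underline\Delta=\underline y^*-\frac{m_0^Y}{m_0^S}$, $\overline\Delta=\frac{m_1^Y-\underline y^*\Delta_S}{m_0^S}-\frac{m_0^Y}{m_0^S}$, $\underline\Lambda=\frac{m_1^Y}{m_1^S}-\frac{m_0^Y-\underline y^*(-\Delta_S)}{m_1^S}$, $\overline\Lambda=\frac{m_1^Y}{m_1^S}-\underline y^*$; under (A7.2), $\underline\Delta=\frac{m_1^Y-\overline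 y^*\Delta_S}{m_0^S}-\frac{m_0^Y}{m_0^S}$, $\overline\Delta=\overline y^*-\frac{m_0^Y}{m_0^S}$, $\underline\Lambda=\frac{m_1^Y}{m_1^S}-\overline y^*$, $\overline\Lambda=\frac{m_1^Y}{m_1^S}-\frac{m_0^Y-\overline y^*(-\Delta_S)}{m_1^S}$; under (A7.3), $\underline\Delta=\max\{\frac{m_1^Y-\overline y^*\Delta_S}{m_0^S},\underline y^*\}-\frac{m_0^Y}{m_0^S}$, $\overline\Delta=\min\{\frac{m_1^Y-\underline y^*\Delta_S}{m_0^S},\overline y^*\}-\frac{m_0^Y}{m_0^S}$, $\underline\Lambda=\frac{m_1^Y}{m_1^S}-\min\{\frac{m_0^Y-\underline y^*(-\Delta_S)}{m_1^S},\overline y^*\}$, $\overline\Lambda=\frac{m_1^Y}{m_1^S}-\max\{\frac{m_0^Y-\overline y^*(-\Delta_S)}{m_1^S},\underline y^*\}$. *)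

theory Defs
  imports "HOL-Probability.Probability"
begin

text \<open>The conditional law given X = x, U = u is represented by a
 kernel K :: 'x => real => 'a measure on the common sample space (a regular
 conditional distribution of the sample point given (X,U)).
 The treatment index d in {0,1} is a nat.\<close>

definition Ssel :: "(nat \<Rightarrow> 'x \<Rightarrow> real) \<Rightarrow> ('a \<Rightarrow> real) \<Rightarrow> nat \<Rightarrow> 'x \<Rightarrow> 'a \<Rightarrow> real" where
  "Ssel Q V d x \<omega> = (if Q d x \<ge> V \<omega> then 1 else 0)"

definition mY :: "('x \<Rightarrow> real \<Rightarrow> 'a measure) \<Rightarrow> (nat \<Rightarrow> 'x \<Rightarrow> real) \<Rightarrow> ('a \<Rightarrow> real)
   \<Rightarrow> (nat \<Rightarrow> 'a \<Rightarrow> real) \<Rightarrow> nat \<Rightarrow> 'x \<Rightarrow> real \<Rightarrow> real" where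
  "mY K Q V Ys d x u = (\<integral>\<omega>. Ssel Q V d x \<omega> * Ys d \<omega> \<partial>(K x u))"

definition mS :: "('x \<Rightarrow> real \<Rightarrow> 'a measure) \<Rightarrow> (nat \<Rightarrow> 'x \<Rightarrow> real) \<Rightarrow> ('a \<Rightarrow> real)
   \<Rightarrow> nat \<Rightarrow> 'x \<Rightarrow> real \<Rightarrow> real" where
  "mS K Q V d x u = (\<integral>\<omega>. Ssel Q V d x \<omega> \<partial>(K x u))"

definition DeltaS :: "('x \<Rightarrow> real \<Rightarrow> 'a measure) \<Rightarrow> (nat \<Rightarrow> 'x \<Rightarrow> real) \<Rightarrow> ('a \<Rightarrow> real)
   \<Rightarrow> 'x \<Rightarrow> real \<Rightarrow> real" where
  "DeltaS K Q V x u = mS K Q V 1 x u - mS K Q V 0 x u"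

definition DeltaOO :: "('x \<Rightarrow> real \<Rightarrow> 'a measure) \<Rightarrow> (nat \<Rightarrow> 'x \<Rightarrow> real) \<Rightarrow> ('a \<Rightarrow> real)
   \<Rightarrow> (nat \<Rightarrow> 'a \<Rightarrow> real) \<Rightarrow> 'x \<Rightarrow> real \<Rightarrow> real" where
  "DeltaOO K Q V Ys x u =
     (\<integral>\<omega>. Ssel Q V 0 x \<omega> * Ssel Q V 1 x \<omega> * (Ys 1 \<omega> - Ys 0 \<omega>) \<partial>(K x u))
     / (\<integral>\<omega>. Ssel Q V 0 x \<omega> * Ssel Q V 1 x \<omega> \<partial>(K x u))"

text \<open>Support cases (A7.1), (A7.2), (A7.3)(a), (A7.3)(b) for the common support Ysupp,
 with underline y^* = Inf Ysupp, overline y^* = Sup Ysupp.\<close>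
datatype supp_case = A71 | A72 | A73a | A73b

fun supp_case_holds :: "supp_case \<Rightarrow> real set \<Rightarrow> bool" where
  "supp_case_holds A71 Y = (bdd_below Y \<and> \<not> bdd_above Y \<and> is_interval Y)"
| "supp_case_holds A72 Y = (\<not> bdd_below Y \<and> bdd_above Y \<and> is_interval Y)"
| "supp_case_holds A73a Y = (bdd_below Y \<and> bdd_above Y \<and> is_interval Y)"
| "supp_case_holds A73b Y = (bdd_below Y \<and> bdd_above Y \<and> Inf Y \<in> Y \<and> Sup Y \<in> Y)"

text \<open>Bound functions, as functions of (m_1^Y, m_0^Y, m_1^S, m_0^S) and the support,
 with Delta_S = m_1^S - m_0^S.\<close>
fun Dlo :: "supp_case \<Rightarrow> real set \<Rightarrow> real \<Rightarrow> real \<Rightarrow> real \<Rightarrow> real \<Rightarrow> real" where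
  "Dlo A71 Y m1Y m0Y m1S m0S = Inf Y - m0Y / m0S"
| "Dlo A72 Y m1Y m0Y m1S m0S = (m1Y - Sup Y * (m1S - m0S)) / m0S - m0Y / m0S"
| "Dlo A73a Y m1Y m0Y m1S m0S = max ((m1Y - Sup Y * (m1S - m0S)) / m0S) (Inf Y) - m0Y / m0S"
| "Dlo A73b Y m1Y m0Y m1S m0S = max ((m1Y - Sup Y * (m1S - m0S)) / m0S) (Inf Y) - m0Y / m0S"

fun Dhi :: "supp_case \<Rightarrow> real set \<Rightarrow> real \<Rightarrow> real \<Rightarrow> real \<Rightarrow> real \<Rightarrow> real" where
  "Dhi A71 Y m1Y m0Y m1S m0S = (m1Y - Inf Y * (m1S - m0S)) / m0S - m0Y / m0S"
| "Dhi A72 Y m1Y m0Y m1S m0S = Sup Y - m0Y / m0S"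
| "Dhi A73a Y m1Y m0Y m1S m0S = min ((m1Y - Inf Y * (m1S - m0S)) / m0S) (Sup Y) - m0Y / m0S"
| "Dhi A73b Y m1Y m0Y m1S m0S = min ((m1Y - Inf Y * (m1S - m0S)) / m0S) (Sup Y) - m0Y / m0S"

fun Llo :: "supp_case \<Rightarrow> real set \<Rightarrow> real \<Rightarrow> real \<Rightarrow> real \<Rightarrow> real \<Rightarrow> real" where
  "Llo A71 Y m1Y m0Y m1S m0S = m1Y / m1S - (m0Y - Inf Y * (- (m1S - m0S))) / m1S"
| "Llo A72 Y m1Y m0Y m1S m0S = m1Y / m1S - Sup Y"
| "Llo A73a Y m1Y m0Y m1S m0S = m1Y / m1S - min ((m0Y - Inf Y * (- (m1S - m0S))) / m1S) (Sup Y)"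
| "Llo A73b Y m1Y m0Y m1S m0S = m1Y / m1S - min ((m0Y - Inf Y * (- (m1S - m0S))) / m1S) (Sup Y)"

fun Lhi :: "supp_case \<Rightarrow> real set \<Rightarrow> real \<Rightarrow> real \<Rightarrow> real \<Rightarrow> real \<Rightarrow> real" where
  "Lhi A71 Y m1Y m0Y m1S m0S = m1Y / m1S - Inf Y"
| "Lhi A72 Y m1Y m0Y m1S m0S = m1Y / m1S - (m0Y - Sup Y * (- (m1S - m0S))) / m1S"
| "Lhi A73a Y m1Y m0Y m1S m0S = m1Y / m1S - max ((m0Y - Sup Y * (- (m1S - m0S))) / m1S) (Inf Y)"
| "Lhi A73b Y m1Y m0Y m1S m0S = m1Y / m1S - max ((m0Y - Sup Y * (- (m1S - m0S))) / m1S) (Inf Y)"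

definition cond_kernel :: "'a measure \<Rightarrow> 'x measure \<Rightarrow> ('a \<Rightarrow> 'x) \<Rightarrow> ('a \<Rightarrow> real)
   \<Rightarrow> ('x \<Rightarrow> real \<Rightarrow> 'a measure) \<Rightarrow> bool" where
  "cond_kernel M MX X U K \<longleftrightarrow>
     (\<forall>x u. prob_space (K x u) \<and> sets (K x u) = sets M) \<and>
     (\<forall>A\<in>sets M. (\<lambda>(x, u). measure (K x u) A) \<in> borel_measurable (MX \<Otimes>\<^sub>M borel) \<and>
        (\<forall>B\<in>sets (MX \<Otimes>\<^sub>M borel).
           measure M (A \<inter> {\<omega>\<in>space M. (X \<omega>, U \<omega>) \<in> B})
           = (\<integral>\<omega>. indicator B (X \<omega>, U \<omega>) * measure (K (X \<omega>) (U \<omega>)) A \<partial>M)))"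

end

theory Submission
  imports Defs
begin

text \<open>Under the conditional law at (x,u) the selection events {S_d = 1} are the sublevel
  sets {V \<le> Q(d,x)} of one and the same V, so they are nested and {S_0 = S_1 = 1} is the
  smaller of the two. If it is {S_0 = 1}, the mean of Y_0^* on it is m_0^Y/m_0^S, while the
  mean of Y_1^* is the mean of Y_1 over a subevent of mass m_0^S of the event {S_1 = 1} of
  mass m_1^S; it is bracketed by the support bounds and by Lee's trimming bounds, which give
  the \<Delta>-bounds. The other ordering gives the \<Lambda>-bounds symmetrically.\<close>

lemma measure_mult_le_integral_indicator:
  fixes Y :: "'a \<Rightarrow> real"
  assumes "finite_measure N" "A \<in> sets N" "integrable N Y"
    and "AE \<omega> in N. \<omega> \<in> A \<longrightarrow> a \<le> Y \<omega>"
  shows "a * measure N A \<le> (\<integral>\<omega>. indicator A \<omega> * Y \<omega> \<partial>N)"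
proof -
  have "a * measure N A = (\<integral>\<omega>. a * indicator A \<omega> \<partial>N)"
    using \<open>A \<in> sets N\<close> by (simp add: Int_absorb2 sets.sets_into_space)
  also have "\<dots> \<le> (\<integral>\<omega>. indicator A \<omega> * Y \<omega> \<partial>N)"
  proof (rule integral_mono_AE)
    show "integrable N (\<lambda>\<omega>. a * indicator A \<omega>)"
      using assms(2) finite_measure.emeasure_finite[OF assms(1)] by (simp add: less_top)
    show "integrable N (\<lambda>\<omega>. indicator A \<omega> * Y \<omega>)"
      using integrable_mult_indicator[OF assms(2,3)] by simp
    show "AE \<omega> in N. a * indicator A \<omega> \<le> indicator A \<omega> * Y \<omega>"
      using assms(4) by eventually_elim (simp add: indicator_def)
  qed
  finally show ?thesis .
qed

lemma integral_indicator_le_measure_mult: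
  fixes Y :: "'a \<Rightarrow> real"
  assumes "finite_measure N" "A \<in> sets N" "integrable N Y"
    and "AE \<omega> in N. \<omega> \<in> A \<longrightarrow> Y \<omega> \<le> b"
  shows "(\<integral>\<omega>. indicator A \<omega> * Y \<omega> \<partial>N) \<le> b * measure N A"
  using measure_mult_le_integral_indicator[of N A "\<lambda>\<omega>. - Y \<omega>" "- b"] assms by simp

text \<open>For the mean t of Y over A \<subseteq> B, with J the integral of Y over B and pA, pB the masses
  of A and B: the part of J outside A has mass pB - pA, hence lies between Inf S and Sup S
  times that mass.\<close>
definition lee_bounds :: "real set \<Rightarrow> real \<Rightarrow> real \<Rightarrow> real \<Rightarrow> real \<Rightarrow> bool" where
  "lee_bounds S J pA pB t \<longleftrightarrow>
     (bdd_below S \<longrightarrow> Inf S \<le> t \<and> t \<le> (J - Inf S * (pB - pA)) / pA) \<and>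
     (bdd_above S \<longrightarrow> t \<le> Sup S \<and> (J - Sup S * (pB - pA)) / pA \<le> t)"

lemma lee_bounds_mean_on_subset:
  fixes Y :: "'a \<Rightarrow> real"
  assumes N: "finite_measure N" and sets: "A \<in> sets N" "B \<in> sets N" and "A \<subseteq> B"
    and pos: "measure N A > 0" and Y: "integrable N Y" and range: "AE \<omega> in N. Y \<omega> \<in> S"
  shows "lee_bounds S (\<integral>\<omega>. indicator B \<omega> * Y \<omega> \<partial>N) (measure N A) (measure N B)
           ((\<integral>\<omega>. indicator A \<omega> * Y \<omega> \<partial>N) / measure N A)"
proof -
  interpret finite_measure N by fact
  let ?I = "\<lambda>E. \<integral>\<omega>. indicator E \<omega> * Y \<omega> \<partial>N"
  have "?I B = (\<integral>\<omega>. indicator A \<omega> * Y \<omega> + indicator (B - A) \<omega> * Y \<omega> \<partial>N)"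
    using \<open>A \<subseteq> B\<close> by (intro Bochner_Integration.integral_cong) (auto simp: indicator_def)
  also have "\<dots> = ?I A + ?I (B - A)"
    using integrable_mult_indicator[OF _ Y] sets by (intro Bochner_Integration.integral_add) auto
  finally have I_split: "?I B = ?I A + ?I (B - A)" .
  have measure_split: "measure N B - measure N A = measure N (B - A)"
    using finite_measure_Diff[OF sets(2,1) \<open>A \<subseteq> B\<close>] by simp
  have lower: "Inf S * measure N E \<le> ?I E" if "bdd_below S" "E \<in> sets N" for E
    using range by (intro measure_mult_le_integral_indicator[OF N \<open>E \<in> sets N\<close> Y])
      (auto elim: AE_mp intro: cInf_lower[OF _ \<open>bdd_below S\<close>])
  have upper: "?I E \<le> Sup S * measure N E" if "bdd_above S" "E \<in> sets N" for E
    using range by (intro integral_indicator_le_measure_mult[OF N \<open>E \<in> sets N\<close> Y])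
      (auto elim: AE_mp intro: cSup_upper[OF _ \<open>bdd_above S\<close>])
  show ?thesis
    unfolding lee_bounds_def I_split measure_split
    using lower[of A] upper[of A] lower[of "B - A"] upper[of "B - A"] sets pos
    by (auto simp: pos_le_divide_eq pos_divide_le_eq mult.commute intro!: divide_right_mono)
qed

lemma lee_bounds_imp_Delta_bounds:
  assumes "supp_case_holds c S" and "lee_bounds S m1Y m0S m1S t"
  shows "Dlo c S m1Y m0Y m1S m0S \<le> t - m0Y / m0S \<and> t - m0Y / m0S \<le> Dhi c S m1Y m0Y m1S m0S"
  using assms by (cases c) (auto simp: lee_bounds_def)

lemma lee_bounds_imp_Lambda_bounds:
  assumes "supp_case_holds c S" and "lee_bounds S m0Y m1S m0S t"
  shows "Llo c S m1Y m0Y m1S m0S \<le> m1Y / m1S - t \<and> m1Y / m1S - t \<le> Lhi c S m1Y m0Y m1S m0S"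
  using assms by (cases c) (auto simp: lee_bounds_def)

definition selected :: "'a measure \<Rightarrow> ('a \<Rightarrow> real) \<Rightarrow> real \<Rightarrow> 'a set" where
  "selected N V q = {\<omega> \<in> space N. V \<omega> \<le> q}"

lemma selected_sets [measurable]: "V \<in> borel_measurable N \<Longrightarrow> selected N V q \<in> sets N"
  unfolding selected_def by measurable

lemma selected_mono: "q \<le> q' \<Longrightarrow> selected N V q \<subseteq> selected N V q'"
  unfolding selected_def by auto

lemma Ssel_eq_indicator_selected:
  "\<omega> \<in> space N \<Longrightarrow> Ssel Q V d x \<omega> = indicator (selected N V (Q d x)) \<omega>"
  by (simp add: Ssel_def selected_def indicator_def)

lemma mS_eq_measure_selected: "mS K Q V d x u = measure (K x u) (selected (K x u) V (Q d x))"
proof -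
  have "mS K Q V d x u = (\<integral>\<omega>. indicator (selected (K x u) V (Q d x)) \<omega> \<partial>K x u)"
    unfolding mS_def by (intro Bochner_Integration.integral_cong refl Ssel_eq_indicator_selected)
  then show ?thesis
    by (simp add: Int_absorb2 selected_def)
qed

lemma mY_eq_integral_selected:
  "mY K Q V Ys d x u = (\<integral>\<omega>. indicator (selected (K x u) V (Q d x)) \<omega> * Ys d \<omega> \<partial>K x u)"
  unfolding mY_def by (intro Bochner_Integration.integral_cong refl) (simp add: Ssel_eq_indicator_selected)

lemma DeltaOO_eq_selected_min:
  fixes Q :: "nat \<Rightarrow> 'x \<Rightarrow> real"
  assumes V: "V \<in> borel_measurable (K x u)"
    and Y: "integrable (K x u) (Ys 0)" "integrable (K x u) (Ys 1)"
  defines "T \<equiv> selected (K x u) V (min (Q 0 x) (Q 1 x))"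
  shows "DeltaOO K Q V Ys x u
    = ((\<integral>\<omega>. indicator T \<omega> * Ys 1 \<omega> \<partial>K x u) - (\<integral>\<omega>. indicator T \<omega> * Ys 0 \<omega> \<partial>K x u))
      / measure (K x u) T"
proof -
  have both: "Ssel Q V 0 x \<omega> * Ssel Q V 1 x \<omega> = indicator T \<omega>" if "\<omega> \<in> space (K x u)" for \<omega>
    using that by (simp add: Ssel_def T_def selected_def indicator_def)
  have "(\<integral>\<omega>. Ssel Q V 0 x \<omega> * Ssel Q V 1 x \<omega> * (Ys 1 \<omega> - Ys 0 \<omega>) \<partial>K x u)
      = (\<integral>\<omega>. indicator T \<omega> * Ys 1 \<omega> - indicator T \<omega> * Ys 0 \<omega> \<partial>K x u)"
    by (intro Bochner_Integration.integral_cong refl) (simp only: both right_diff_distrib)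
  also have "\<dots> = (\<integral>\<omega>. indicator T \<omega> * Ys 1 \<omega> \<partial>K x u) - (\<integral>\<omega>. indicator T \<omega> * Ys 0 \<omega> \<partial>K x u)"
    using integrable_mult_indicator[of T, OF _ Y(1)] integrable_mult_indicator[of T, OF _ Y(2)] V
    by (intro Bochner_Integration.integral_diff) (auto simp: T_def)
  finally have numerator: "(\<integral>\<omega>. Ssel Q V 0 x \<omega> * Ssel Q V 1 x \<omega> * (Ys 1 \<omega> - Ys 0 \<omega>) \<partial>K x u)
      = (\<integral>\<omega>. indicator T \<omega> * Ys 1 \<omega> \<partial>K x u) - (\<integral>\<omega>. indicator T \<omega> * Ys 0 \<omega> \<partial>K x u)" .
  have "(\<integral>\<omega>. Ssel Q V 0 x \<omega> * Ssel Q V 1 x \<omega> \<partial>K x u) = (\<integral>\<omega>. indicator T \<omega> \<partial>K x u)"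
    by (intro Bochner_Integration.integral_cong refl both)
  then have denominator: "(\<integral>\<omega>. Ssel Q V 0 x \<omega> * Ssel Q V 1 x \<omega> \<partial>K x u) = measure (K x u) T"
    by (simp add: Int_absorb2 T_def selected_def)
  show ?thesis
    unfolding DeltaOO_def numerator denominator ..
qed

lemma lee_bounds_selected_mean:
  assumes "prob_space (K x u)" "V \<in> borel_measurable (K x u)" "Q d x \<le> Q e x"
    and "mS K Q V d x u \<noteq> 0"
    and "integrable (K x u) (Ys e)" "AE \<omega> in K x u. Ys e \<omega> \<in> S"
  shows "lee_bounds S (mY K Q V Ys e x u) (mS K Q V d x u) (mS K Q V e x u)
    ((\<integral>\<omega>. indicator (selected (K x u) V (Q d x)) \<omega> * Ys e \<omega> \<partial>K x u) / mS K Q V d x u)"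
  unfolding mY_eq_integral_selected mS_eq_measure_selected
  using assms mS_eq_measure_selected[of K Q V d x u]
  by (intro lee_bounds_mean_on_subset selected_mono)
    (auto intro: prob_space.axioms(1) simp: order_less_le)

lemma DeltaOO_within_Delta_bounds:
  assumes N: "prob_space (K x u)" and V: "V \<in> borel_measurable (K x u)"
    and sel: "Q 0 x \<le> Q 1 x" and pos: "mS K Q V 0 x u \<noteq> 0"
    and Y: "integrable (K x u) (Ys 0)" "integrable (K x u) (Ys 1)"
    and range: "AE \<omega> in K x u. Ys 1 \<omega> \<in> S" and supp: "supp_case_holds c S"
  shows "Dlo c S (mY K Q V Ys 1 x u) (mY K Q V Ys 0 x u) (mS K Q V 1 x u) (mS K Q V 0 x u)
           \<le> DeltaOO K Q V Ys x u
         \<and> DeltaOO K Q V Ys x u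
           \<le> Dhi c S (mY K Q V Ys 1 x u) (mY K Q V Ys 0 x u) (mS K Q V 1 x u) (mS K Q V 0 x u)"
proof -
  define t where "t = (\<integral>\<omega>. indicator (selected (K x u) V (Q 0 x)) \<omega> * Ys 1 \<omega> \<partial>K x u) / mS K Q V 0 x u"
  have "DeltaOO K Q V Ys x u = t - mY K Q V Ys 0 x u / mS K Q V 0 x u"
    using DeltaOO_eq_selected_min[of V K x u Ys Q] V Y sel
    by (simp add: t_def min_absorb1 mS_eq_measure_selected mY_eq_integral_selected diff_divide_distrib)
  moreover have "lee_bounds S (mY K Q V Ys 1 x u) (mS K Q V 0 x u) (mS K Q V 1 x u) t"
    unfolding t_def using N V sel pos Y(2) range by (rule lee_bounds_selected_mean)
  ultimately show ?thesis
    using lee_bounds_imp_Delta_bounds[OF supp] by simp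
qed

lemma DeltaOO_within_Lambda_bounds:
  assumes N: "prob_space (K x u)" and V: "V \<in> borel_measurable (K x u)"
    and sel: "Q 1 x \<le> Q 0 x" and pos: "mS K Q V 1 x u \<noteq> 0"
    and Y: "integrable (K x u) (Ys 0)" "integrable (K x u) (Ys 1)"
    and range: "AE \<omega> in K x u. Ys 0 \<omega> \<in> S" and supp: "supp_case_holds c S"
  shows "Llo c S (mY K Q V Ys 1 x u) (mY K Q V Ys 0 x u) (mS K Q V 1 x u) (mS K Q V 0 x u)
           \<le> DeltaOO K Q V Ys x u
         \<and> DeltaOO K Q V Ys x u
           \<le> Lhi c S (mY K Q V Ys 1 x u) (mY K Q V Ys 0 x u) (mS K Q V 1 x u) (mS K Q V 0 x u)"
proof -
  define t where "t = (\<integral>\<omega>. indicator (selected (K x u) V (Q 1 x)) \<omega> * Ys 0 \<omega> \<partial>K x u) / mS K Q V 1 x u"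
  have "DeltaOO K Q V Ys x u = mY K Q V Ys 1 x u / mS K Q V 1 x u - t"
    using DeltaOO_eq_selected_min[of V K x u Ys Q] V Y sel
    by (simp add: t_def min_absorb2 mS_eq_measure_selected mY_eq_integral_selected diff_divide_distrib)
  moreover have "lee_bounds S (mY K Q V Ys 0 x u) (mS K Q V 1 x u) (mS K Q V 0 x u) t"
    unfolding t_def using N V sel pos Y(1) range by (rule lee_bounds_selected_mean)
  ultimately show ?thesis
    using lee_bounds_imp_Lambda_bounds[OF supp] by simp
qed

theorem corollaryD1:
  fixes M :: "'a measure" and MX :: "'x measure"
    and X :: "'a \<Rightarrow> 'x" and U V :: "'a \<Rightarrow> real"
    and Ys :: "nat \<Rightarrow> 'a \<Rightarrow> real"
    and Q :: "nat \<Rightarrow> 'x \<Rightarrow> real"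
    and K :: "'x \<Rightarrow> real \<Rightarrow> 'a measure"
    and Xset :: "'x set" and Ysupp :: "real set"
    and c :: supp_case
    and x :: 'x and u :: real
  assumes M: "prob_space M"
    and X_meas: "X \<in> measurable M MX"
    and U_meas: "U \<in> borel_measurable M"
    and V_meas: "V \<in> borel_measurable M"
    and Ys_meas: "\<And>d. d \<in> {0, 1} \<Longrightarrow> Ys d \<in> borel_measurable M"
    and Q_range: "\<And>d x. d \<in> {0, 1} \<Longrightarrow> x \<in> Xset \<Longrightarrow> Q d x \<in> {0..1}"
    and X_supp: "\<forall>\<omega>\<in>space M. X \<omega> \<in> Xset"
    and K: "cond_kernel M MX X U K"
    and A3: "\<And>d. d \<in> {0, 1} \<Longrightarrow> integrable M (Ys d) \<and> integrable M (\<lambda>\<omega>. (Ys d \<omega>)\<^sup>2)"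
    and A3_cond: "\<And>d. d \<in> {0, 1} \<Longrightarrow> integrable (K x u) (Ys d)"
    and A6_ne: "Ysupp \<noteq> {}"
    and A6: "\<And>d. d \<in> {0, 1} \<Longrightarrow> AE \<omega> in M. Ys d \<omega> \<in> Ysupp"
    and A6_cond: "\<And>d. d \<in> {0, 1} \<Longrightarrow> AE \<omega> in K x u. Ys d \<omega> \<in> Ysupp"
    and A7: "supp_case_holds c Ysupp"
    and A8: "(\<forall>x\<in>Xset. Q 1 x > Q 0 x \<and> Q 0 x > 0) \<or> (\<forall>x\<in>Xset. Q 0 x > Q 1 x \<and> Q 1 x > 0)"
    and wd0: "mS K Q V 0 x u \<noteq> 0"
    and wd1: "mS K Q V 1 x u \<noteq> 0"
    and wdOO: "(\<integral>\<omega>. Ssel Q V 0 x \<omega> * Ssel Q V 1 x \<omega> \<partial>(K x u)) \<noteq> 0"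
    and x: "x \<in> Xset" and u: "u \<in> {0..1}"
  shows "min (Dlo c Ysupp (mY K Q V Ys 1 x u) (mY K Q V Ys 0 x u) (mS K Q V 1 x u) (mS K Q V 0 x u))
             (Llo c Ysupp (mY K Q V Ys 1 x u) (mY K Q V Ys 0 x u) (mS K Q V 1 x u) (mS K Q V 0 x u))
           \<le> DeltaOO K Q V Ys x u
         \<and> DeltaOO K Q V Ys x u
           \<le> max (Dhi c Ysupp (mY K Q V Ys 1 x u) (mY K Q V Ys 0 x u) (mS K Q V 1 x u) (mS K Q V 0 x u))
             (Lhi c Ysupp (mY K Q V Ys 1 x u) (mY K Q V Ys 0 x u) (mS K Q V 1 x u) (mS K Q V 0 x u))"
proof -
  have N: "prob_space (K x u)" and "sets (K x u) = sets M"
    using K unfolding cond_kernel_def by auto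
  then have V: "V \<in> borel_measurable (K x u)"
    using V_meas measurable_cong_sets[OF _ refl] by blast
  have Y0: "integrable (K x u) (Ys 0)" "AE \<omega> in K x u. Ys 0 \<omega> \<in> Ysupp"
    and Y1: "integrable (K x u) (Ys 1)" "AE \<omega> in K x u. Ys 1 \<omega> \<in> Ysupp"
    using A3_cond A6_cond by auto
  consider "Q 0 x \<le> Q 1 x" | "Q 1 x \<le> Q 0 x"
    by linarith
  then show ?thesis
  proof cases
    case 1
    with DeltaOO_within_Delta_bounds[OF N V 1 wd0 Y0(1) Y1] A7 show ?thesis
      by (simp add: min_le_iff_disj le_max_iff_disj)
  next
    case 2
    with DeltaOO_within_Lambda_bounds[OF N V 2 wd1 Y0(1) Y1(1) Y0(2)] A7 show ?thesis
      by (simp add: min_le_iff_disj le_max_iff_disj)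
  qed
qed

end
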